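(* Let $G$ be a finitely generated group and $\phi\in\mathrm{Aut}(G)$. Then: (i) if $GCP_{f.g.}(G\rtimes_\phi\mathbb{Z})$ is decidable, then $GBrCP_{(f.g.,\phi)}(G)$ is decidable; (ii) if $GCP_{f.g.}(G\rtimes\mathbb{Z})$ is decidable, then $GBrCP_{f.g.}(G)$ is decidable; (iii) if $GCP_{[f.g.\,coset]}(G\rtimes_\phi\mathbb{Z})$ is decidable, then $GBrCP_{([f.g.\,coset],\phi)}(G)$ and $GTCP_{([f.g.\,coset],\phi)}(G)$ are decidable; (iv) if $GCP_{[f.g.\,coset]}(G\rtimes\mathbb{Z})$ is decidable, then $GBrCP_{[f.g.\,coset]}(G)$ and $GTCP_{[f.g.\,coset]}(G)$ are decidable.
   Context: $G\rtimes_\psi\mathbb{Z}$ is generated by $G$ and $t$ with $t^{-1}at=\psi(a)$. Subgroups are given by finite generating sets, cosets $yH$ by $y$ and generators of $H$. For a class $\mathcal C$ ($f.g.$ = finitely generated subgroups, $[f.g.\,coset]$ = cosets of finitely generated subgroups): $GCP_{\mathcal C}(X)$: given $K\in\mathcal C$ in the group $X$ and $x\in X$, decide whether some conjugate of $x$ lies in $K$; $GCP_{\mathcal C}(G\rtimes\mathbb{Z})$ is the uniform version in which the automorphism $\psi$ defining $G\rtimes_\psi\mathbb{Z}$ is also part of the input. $GBrCP_{\mathcal C}(G)$: given $K\in\mathcal C$ in $G$, $\psi\in\mathrm{Aut}(G)$, $x\in G$, decide whether some $\psi^k(x)$ ($k\in\mathbb{Z}$) is conjugate to an element of $K$. $GTCP_{\mathcal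 C}(G)$: given $K$, $\psi$, $x$, decide whether there is $z\in G$ with $\psi(z)^{-1}xz\in K$. A subscript $(\mathcal C,\phi)$ means the automorphism is fixed to be $\phi$ rather than being part of the input. *)

theory Defs
  imports "HOL-Algebra.Algebra" "HOL-Library.Nat_Bijection"
begin

text \<open>recfn n f: f is a total recursive function of arity n (only its values on
  argument lists of length n matter).  Minimisation is only allowed when a root
  always exists, so all functions in the class are total.\<close>

inductive recfn :: "nat \<Rightarrow> (nat list \<Rightarrow> nat) \<Rightarrow> bool" where
  rf_zero: "recfn n (\<lambda>xs. 0)"
| rf_succ: "recfn 1 (\<lambda>xs. Suc (hd xs))"
| rf_proj: "i < n \<Longrightarrow> recfn n (\<lambda>xs. xs ! i)"
| rf_comp: "recfn m f \<Longrightarrow> length gs = m \<Longrightarrow> (\<forall>g\<in>set gs. recfn n g)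
             \<Longrightarrow> recfn n (\<lambda>xs. f (map (\<lambda>g. g xs) gs))"
| rf_prim: "recfn n f \<Longrightarrow> recfn (Suc (Suc n)) g
             \<Longrightarrow> recfn (Suc n) (\<lambda>xs. rec_nat (f (tl xs)) (\<lambda>y r. g (y # r # tl xs)) (hd xs))"
| rf_mu: "recfn (Suc n) f \<Longrightarrow> (\<forall>xs. length xs = n \<longrightarrow> (\<exists>y. f (y # xs) = 0))
             \<Longrightarrow> recfn n (\<lambda>xs. LEAST y. f (y # xs) = 0)"

text \<open>A (promise) decision problem: a set D of valid input codes and the set S of
  yes-instances.  It is decidable if a total recursive function answers correctly
  (0 = yes) on every valid input.\<close>

definition decidable :: "nat set \<times> nat set \<Rightarrow> bool" where
  "decidable P \<longleftrightarrow> (\<exists>f. recfn 1 f \<and> (\<forall>c\<in>fst P. (f [c] = 0 \<longleftrightarrow> c \<in> snd P)))"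

text \<open>Words over generators a_0..a_{n-1}: letter 2i stands for a_i, 2i+1 for a_i^{-1}.\<close>

definition word_ok :: "nat \<Rightarrow> nat list \<Rightarrow> bool" where
  "word_ok n w \<longleftrightarrow> (\<forall>l\<in>set w. l < 2 * n)"

definition enc_words :: "nat list list \<Rightarrow> nat" where
  "enc_words ws = list_encode (map list_encode ws)"

definition eval_word :: "('a, 'b) monoid_scheme \<Rightarrow> 'a list \<Rightarrow> nat list \<Rightarrow> 'a" where
  "eval_word H hs w = foldr (\<lambda>l acc.
      (if even l then hs ! (l div 2) else inv\<^bsub>H\<^esub> (hs ! (l div 2))) \<otimes>\<^bsub>H\<^esub> acc) w \<one>\<^bsub>H\<^esub>"

definition autpow :: "('a, 'b) monoid_scheme \<Rightarrow> ('a \<Rightarrow> 'a) \<Rightarrow> int \<Rightarrow> 'a \<Rightarrow> 'a" where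
  "autpow G \<psi> k = (if 0 \<le> k then \<psi> ^^ nat k else (inv_into (carrier G) \<psi>) ^^ nat (- k))"

text \<open>The pair (g,k) represents g t^k; from t^{-1} a t = \<psi>(a) one gets
  t^k h = \<psi>^{-k}(h) t^k.\<close>
definition sdp :: "('a, 'b) monoid_scheme \<Rightarrow> ('a \<Rightarrow> 'a) \<Rightarrow> ('a \<times> int) monoid" where
  "sdp G \<psi> = \<lparr>carrier = carrier G \<times> UNIV,
              monoid.mult = (\<lambda>(g, k) (h, l). (g \<otimes>\<^bsub>G\<^esub> autpow G \<psi> (- k) h, k + l)),
              monoid.one = (\<one>\<^bsub>G\<^esub>, 0)\<rparr>"

text \<open>Generators of G \<rtimes> Z: those of G (letters 0..n-1) followed by t (letter n).\<close>
definition sdp_gens :: "('a, 'b) monoid_scheme \<Rightarrow> 'a list \<Rightarrow> ('a \<times> int) list" where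
  "sdp_gens G gs = map (\<lambda>g. (g, 0)) gs @ [(\<one>\<^bsub>G\<^esub>, 1)]"

datatype setclass = FG | FGCoset

text \<open>A member of the class is given by (y, Ks): the subgroup generated by the
  words Ks (for FG, y must be the empty word), resp. the coset y<H> (FGCoset).\<close>

definition K_ok :: "setclass \<Rightarrow> nat \<Rightarrow> nat list \<Rightarrow> nat list list \<Rightarrow> bool" where
  "K_ok cls n y Ks \<longleftrightarrow> word_ok n y \<and> (\<forall>w\<in>set Ks. word_ok n w) \<and> (cls = FG \<longrightarrow> y = [])"

definition K_code :: "setclass \<Rightarrow> nat list \<Rightarrow> nat list list \<Rightarrow> nat" where
  "K_code cls y Ks = (if cls = FG then enc_words Ks else prod_encode (list_encode y, enc_words Ks))"

definition K_set :: "setclass \<Rightarrow> ('a, 'b) monoid_scheme \<Rightarrow> 'a list \<Rightarrow> nat list \<Rightarrow> nat list list \<Rightarrow> 'a set" where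
  "K_set cls H hs y Ks = (if cls = FG then generate H (eval_word H hs ` set Ks)
      else eval_word H hs y <#\<^bsub>H\<^esub> generate H (eval_word H hs ` set Ks))"

definition fixed_problem :: "setclass \<Rightarrow> nat \<Rightarrow> (nat list \<Rightarrow> nat list list \<Rightarrow> nat list \<Rightarrow> bool)
    \<Rightarrow> nat set \<times> nat set" where
  "fixed_problem cls n P =
    ({prod_encode (K_code cls y Ks, list_encode x) | y Ks x. K_ok cls n y Ks \<and> word_ok n x},
     {prod_encode (K_code cls y Ks, list_encode x) | y Ks x. K_ok cls n y Ks \<and> word_ok n x \<and> P y Ks x})"

text \<open>Uniform problem: additionally an automorphism \<psi> of G is part of the input,
  given by the words ps (over the n = length gs generators of G) representing the
  images of the generators; K and x are words over m letters.\<close>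
definition aut_given :: "('a, 'b) monoid_scheme \<Rightarrow> 'a list \<Rightarrow> nat list list \<Rightarrow> ('a \<Rightarrow> 'a) \<Rightarrow> bool" where
  "aut_given G gs ps \<psi> \<longleftrightarrow> \<psi> \<in> iso G G \<and> length ps = length gs \<and>
     (\<forall>i < length gs. \<psi> (gs ! i) = eval_word G gs (ps ! i))"

definition uniform_problem :: "setclass \<Rightarrow> ('a, 'b) monoid_scheme \<Rightarrow> 'a list \<Rightarrow> nat
    \<Rightarrow> (('a \<Rightarrow> 'a) \<Rightarrow> nat list \<Rightarrow> nat list list \<Rightarrow> nat list \<Rightarrow> bool) \<Rightarrow> nat set \<times> nat set" where
  "uniform_problem cls G gs m P =
    ({prod_encode (enc_words ps, prod_encode (K_code cls y Ks, list_encode x)) | ps y Ks x.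
        (\<forall>w\<in>set ps. word_ok (length gs) w) \<and> (\<exists>\<psi>. aut_given G gs ps \<psi>) \<and>
        K_ok cls m y Ks \<and> word_ok m x},
     {prod_encode (enc_words ps, prod_encode (K_code cls y Ks, list_encode x)) | ps y Ks x.
        (\<forall>w\<in>set ps. word_ok (length gs) w) \<and> (\<exists>\<psi>. aut_given G gs ps \<psi>) \<and>
        K_ok cls m y Ks \<and> word_ok m x \<and>
        (\<exists>\<psi>. aut_given G gs ps \<psi> \<and> P \<psi> y Ks x)})"

definition gcp_pred :: "setclass \<Rightarrow> ('a, 'b) monoid_scheme \<Rightarrow> 'a list \<Rightarrow> nat list \<Rightarrow> nat list list \<Rightarrow> nat list \<Rightarrow> bool" where
  "gcp_pred cls H hs y Ks x \<longleftrightarrow> (\<exists>z\<in>carrier H.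
      inv\<^bsub>H\<^esub> z \<otimes>\<^bsub>H\<^esub> eval_word H hs x \<otimes>\<^bsub>H\<^esub> z \<in> K_set cls H hs y Ks)"

definition brcp_pred :: "setclass \<Rightarrow> ('a, 'b) monoid_scheme \<Rightarrow> 'a list \<Rightarrow> ('a \<Rightarrow> 'a) \<Rightarrow> nat list \<Rightarrow> nat list list \<Rightarrow> nat list \<Rightarrow> bool" where
  "brcp_pred cls G gs \<psi> y Ks x \<longleftrightarrow> (\<exists>k::int. \<exists>z\<in>carrier G.
      inv\<^bsub>G\<^esub> z \<otimes>\<^bsub>G\<^esub> autpow G \<psi> k (eval_word G gs x) \<otimes>\<^bsub>G\<^esub> z \<in> K_set cls G gs y Ks)"

definition tcp_pred :: "setclass \<Rightarrow> ('a, 'b) monoid_scheme \<Rightarrow> 'a list \<Rightarrow> ('a \<Rightarrow> 'a) \<Rightarrow> nat list \<Rightarrow> nat list list \<Rightarrow> nat list \<Rightarrow> bool" where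
  "tcp_pred cls G gs \<psi> y Ks x \<longleftrightarrow> (\<exists>z\<in>carrier G.
      inv\<^bsub>G\<^esub> (\<psi> z) \<otimes>\<^bsub>G\<^esub> eval_word G gs x \<otimes>\<^bsub>G\<^esub> z \<in> K_set cls G gs y Ks)"

definition GCP_fixed :: "setclass \<Rightarrow> ('a, 'b) monoid_scheme \<Rightarrow> 'a list \<Rightarrow> ('a \<Rightarrow> 'a) \<Rightarrow> nat set \<times> nat set" where
  "GCP_fixed cls G gs \<phi> = fixed_problem cls (Suc (length gs)) (gcp_pred cls (sdp G \<phi>) (sdp_gens G gs))"

definition GCP_unif :: "setclass \<Rightarrow> ('a, 'b) monoid_scheme \<Rightarrow> 'a list \<Rightarrow> nat set \<times> nat set" where
  "GCP_unif cls G gs = uniform_problem cls G gs (Suc (length gs))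
      (\<lambda>\<psi>. gcp_pred cls (sdp G \<psi>) (sdp_gens G gs))"

definition GBrCP_fixed :: "setclass \<Rightarrow> ('a, 'b) monoid_scheme \<Rightarrow> 'a list \<Rightarrow> ('a \<Rightarrow> 'a) \<Rightarrow> nat set \<times> nat set" where
  "GBrCP_fixed cls G gs \<phi> = fixed_problem cls (length gs) (brcp_pred cls G gs \<phi>)"

definition GBrCP_unif :: "setclass \<Rightarrow> ('a, 'b) monoid_scheme \<Rightarrow> 'a list \<Rightarrow> nat set \<times> nat set" where
  "GBrCP_unif cls G gs = uniform_problem cls G gs (length gs) (brcp_pred cls G gs)"

definition GTCP_fixed :: "setclass \<Rightarrow> ('a, 'b) monoid_scheme \<Rightarrow> 'a list \<Rightarrow> ('a \<Rightarrow> 'a) \<Rightarrow> nat set \<times> nat set" where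
  "GTCP_fixed cls G gs \<phi> = fixed_problem cls (length gs) (tcp_pred cls G gs \<phi>)"

definition GTCP_unif :: "setclass \<Rightarrow> ('a, 'b) monoid_scheme \<Rightarrow> 'a list \<Rightarrow> nat set \<times> nat set" where
  "GTCP_unif cls G gs = uniform_problem cls G gs (length gs) (tcp_pred cls G gs)"

end

theory Submission
  imports Defs
begin

(* In the semidirect product G \<rtimes>\<^sub>\<psi> Z, where (g, k) stands for g t^k, both problems about G
   become instances of the generalized conjugacy problem.  Conjugating g \<in> G by z t^k gives
   \<psi>^k(z)^-1 \<psi>^k(g) \<psi>^k(z), so g has a conjugate in a subset K of G inside G \<rtimes>\<^sub>\<psi> Z iff some
   \<psi>^k(g) has a G-conjugate in K: the brute-force conjugacy problem is the generalized conjugacy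
   problem restricted to words over G, and the reduction is the identity on codes.  For the
   twisted problem, z^-1 (t x) z = t \<psi>(z)^-1 x z and t^-k (t x) t^k = t \<psi>^k(x), where \<psi>^k(x) is
   itself a \<psi>-twisted conjugate of x; hence t x has a conjugate in the coset t K iff x has a
   twisted conjugate in K, and prepending the letter t to both words of an instance is the
   reduction.  Both maps on codes are computable and ignore \<psi>, so they also work uniformly in
   the automorphism, and neither needs gs to generate G. *)

section \<open>Computable functions\<close>

definition computable :: "nat \<Rightarrow> (nat list \<Rightarrow> nat) \<Rightarrow> bool" where
  "computable n f \<longleftrightarrow> (\<exists>g. recfn n g \<and> (\<forall>xs. length xs = n \<longrightarrow> g xs = f xs))"

lemma computable_cong:
  "computable m f \<Longrightarrow> m = n \<Longrightarrow> (\<And>xs. length xs = n \<Longrightarrow> f xs = g xs) \<Longrightarrow> computable n g"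
  unfolding computable_def by metis

lemma computable_proj: "i < n \<Longrightarrow> computable n (\<lambda>xs. xs ! i)"
  unfolding computable_def using rf_proj by blast

lemma computable_comp:
  assumes f: "computable m f" and gs: "length gs = m" "\<forall>g\<in>set gs. computable n g"
  shows "computable n (\<lambda>xs. f (map (\<lambda>g. g xs) gs))"
proof -
  obtain F where F: "recfn m F" "\<forall>xs. length xs = m \<longrightarrow> F xs = f xs"
    using f unfolding computable_def by blast
  have "\<exists>Gs. length Gs = length gs \<and> (\<forall>G\<in>set Gs. recfn n G) \<and>
      (\<forall>xs. length xs = n \<longrightarrow> map (\<lambda>G. G xs) Gs = map (\<lambda>g. g xs) gs)"
    using gs(2)
  proof (induction gs)
    case Nil
    show ?case by simp
  next
    case (Cons g gs)
    then obtain Gs where "length Gs = length gs" "\<forall>G\<in>set Gs. recfn n G"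
        "\<forall>xs. length xs = n \<longrightarrow> map (\<lambda>G. G xs) Gs = map (\<lambda>g. g xs) gs"
      by auto
    moreover obtain G where "recfn n G" "\<forall>xs. length xs = n \<longrightarrow> G xs = g xs"
      using Cons.prems unfolding computable_def by auto
    ultimately show ?case by (intro exI[of _ "G # Gs"]) simp
  qed
  then obtain Gs where Gs: "length Gs = length gs" "\<forall>G\<in>set Gs. recfn n G"
      "\<forall>xs. length xs = n \<longrightarrow> map (\<lambda>G. G xs) Gs = map (\<lambda>g. g xs) gs"
    by blast
  have "recfn n (\<lambda>xs. F (map (\<lambda>G. G xs) Gs))"
    using F(1) Gs gs(1) by (intro rf_comp) auto
  moreover have "F (map (\<lambda>G. G xs) Gs) = f (map (\<lambda>g. g xs) gs)" if "length xs = n" for xs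
    using that Gs(3) F(2) gs(1) by simp
  ultimately show ?thesis unfolding computable_def by blast
qed

lemma computable_comp1:
  "computable 1 (\<lambda>xs. h (xs ! 0)) \<Longrightarrow> computable n g \<Longrightarrow> computable n (\<lambda>xs. h (g xs))"
  using computable_comp[of 1 "\<lambda>xs. h (xs ! 0)" "[g]"] by simp

lemma computable_comp2:
  "computable 2 (\<lambda>xs. h (xs ! 0) (xs ! 1)) \<Longrightarrow> computable n g1 \<Longrightarrow> computable n g2
    \<Longrightarrow> computable n (\<lambda>xs. h (g1 xs) (g2 xs))"
  using computable_comp[of 2 "\<lambda>xs. h (xs ! 0) (xs ! 1)" "[g1, g2]"] by simp

lemma computable_Suc:
  assumes "computable n f" shows "computable n (\<lambda>xs. Suc (f xs))"
proof -
  have "computable 1 (\<lambda>xs. Suc (xs ! 0))"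
    using rf_succ unfolding computable_def by (metis hd_conv_nth list.size(3) zero_neq_one)
  then show ?thesis using assms by (rule computable_comp1)
qed

lemma computable_const: "computable n (\<lambda>xs. k)"
proof (induction k)
  case 0
  show ?case unfolding computable_def using rf_zero by blast
next
  case (Suc k)
  then show ?case by (rule computable_Suc)
qed

lemma computable_rec_nat:
  assumes "computable n f" "computable (Suc (Suc n)) g"
  shows "computable (Suc n) (\<lambda>xs. rec_nat (f (tl xs)) (\<lambda>y r. g (y # r # tl xs)) (hd xs))"
proof -
  obtain F where F: "recfn n F" "\<forall>xs. length xs = n \<longrightarrow> F xs = f xs"
    using assms(1) unfolding computable_def by blast
  obtain G where G: "recfn (Suc (Suc n)) G" "\<forall>xs. length xs = Suc (Suc n) \<longrightarrow> G xs = g xs"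
    using assms(2) unfolding computable_def by blast
  have "rec_nat (F (tl xs)) (\<lambda>y r. G (y # r # tl xs)) k = rec_nat (f (tl xs)) (\<lambda>y r. g (y # r # tl xs)) k"
    if "length xs = Suc n" for xs k
    using that F(2) G(2) by (induction k) auto
  then show ?thesis
    using rf_prim[OF F(1) G(1)] unfolding computable_def by blast
qed

lemma computable_Least:
  assumes "computable (Suc n) f" "\<And>xs. length xs = n \<Longrightarrow> \<exists>y. f (y # xs) = 0"
  shows "computable n (\<lambda>xs. LEAST y. f (y # xs) = 0)"
proof -
  obtain F where F: "recfn (Suc n) F" "\<forall>xs. length xs = Suc n \<longrightarrow> F xs = f xs"
    using assms(1) unfolding computable_def by blast
  have "recfn n (\<lambda>xs. LEAST y. F (y # xs) = 0)"
    using F assms(2) by (intro rf_mu) auto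
  then show ?thesis unfolding computable_def using F(2) by auto
qed

lemma computable_add:
  assumes "computable n f" "computable n g" shows "computable n (\<lambda>xs. f xs + g xs)"
proof -
  have rec: "computable (Suc (Suc 0)) (\<lambda>xs. rec_nat (tl xs ! 0) (\<lambda>y r. Suc ((y # r # tl xs) ! 1)) (hd xs))"
    by (intro computable_rec_nat computable_proj computable_Suc) simp_all
  have eq: "rec_nat b (\<lambda>y. Suc) a = a + b" for a b :: nat
    by (induction a) simp_all
  have "computable 2 (\<lambda>xs. xs ! 0 + xs ! 1)"
    by (rule computable_cong[OF rec]) (auto simp: eq numeral_2_eq_2 length_Suc_conv)
  then show ?thesis using assms by (rule computable_comp2)
qed

lemma computable_pred:
  assumes "computable n f" shows "computable n (\<lambda>xs. f xs - 1)"
proof -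
  have rec: "computable (Suc 0) (\<lambda>xs. rec_nat 0 (\<lambda>y r. (y # r # tl xs) ! 0) (hd xs))"
    by (intro computable_rec_nat computable_const computable_proj) simp
  have eq: "rec_nat 0 (\<lambda>y r. y) a = a - 1" for a :: nat
    by (cases a) simp_all
  have "computable 1 (\<lambda>xs. xs ! 0 - 1)"
    by (rule computable_cong[OF rec]) (auto simp: eq length_Suc_conv)
  then show ?thesis using assms by (rule computable_comp1)
qed

lemma computable_diff:
  assumes "computable n f" "computable n g" shows "computable n (\<lambda>xs. f xs - g xs)"
proof -
  have rec: "computable (Suc (Suc 0)) (\<lambda>xs. rec_nat (tl xs ! 0) (\<lambda>y r. (y # r # tl xs) ! 1 - 1) (hd xs))"
    by (intro computable_rec_nat computable_proj computable_pred) simp_all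
  have eq: "rec_nat b (\<lambda>y r. r - Suc 0) a = b - a" for a b :: nat
    by (induction a) simp_all
  have "computable 2 (\<lambda>xs. xs ! 1 - xs ! 0)"
    by (rule computable_cong[OF rec]) (auto simp: eq numeral_2_eq_2 length_Suc_conv)
  from computable_comp2[of "\<lambda>a b. b - a", OF this assms(2,1)] show ?thesis by simp
qed

lemma computable_triangle:
  assumes "computable n f" shows "computable n (\<lambda>xs. triangle (f xs))"
proof -
  have rec: "computable (Suc 0) (\<lambda>xs. rec_nat 0 (\<lambda>y r. (y # r # tl xs) ! 1 + Suc ((y # r # tl xs) ! 0)) (hd xs))"
    by (intro computable_rec_nat computable_const computable_add computable_Suc computable_proj) simp_all
  have eq: "rec_nat 0 (\<lambda>y r. Suc (r + y)) a = triangle a" for a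
    by (induction a) simp_all
  have "computable 1 (\<lambda>xs. triangle (xs ! 0))"
    by (rule computable_cong[OF rec]) (auto simp: eq length_Suc_conv)
  then show ?thesis using assms by (rule computable_comp1)
qed

lemma computable_prod_encode:
  "computable n f \<Longrightarrow> computable n g \<Longrightarrow> computable n (\<lambda>xs. prod_encode (f xs, g xs))"
  unfolding prod_encode_def case_prod_conv by (intro computable_add computable_triangle)

lemma prod_decode_eq_triangle: "prod_decode c = (a, b) \<Longrightarrow> c = triangle (a + b) + a"
  using prod_decode_inverse[of c] by (simp add: prod_encode_def)

lemma prod_decode_diagonal:
  "fst (prod_decode c) + snd (prod_decode c) = (LEAST s. c < triangle (Suc s))"
proof -
  obtain a b where ab: "prod_decode c = (a, b)" by fastforce
  then have c: "c = triangle (a + b) + a" by (rule prod_decode_eq_triangle)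
  have "(LEAST s. c < triangle (Suc s)) = a + b"
  proof (rule Least_equality)
    show "c < triangle (Suc (a + b))" using c by simp
  next
    fix s assume "c < triangle (Suc s)"
    show "a + b \<le> s"
    proof (rule ccontr)
      assume "\<not> a + b \<le> s"
      then have "triangle (Suc s) \<le> triangle (a + b)"
        by (intro monoD[of triangle]) (auto simp: mono_iff_le_Suc)
      then show False using \<open>c < triangle (Suc s)\<close> c by simp
    qed
  qed
  then show ?thesis using ab by simp
qed

text \<open>Decoding inverts the Cantor pairing \<open>prod_encode (a, b) = triangle (a + b) + a\<close>:
  the diagonal \<open>a + b\<close> is found by unbounded search, then \<open>a\<close> and \<open>b\<close> by subtraction.\<close>

lemma computable_prod_decode_diagonal:
  assumes "computable n f"
  shows "computable n (\<lambda>xs. fst (prod_decode (f xs)) + snd (prod_decode (f xs)))"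
proof -
  have search: "computable (Suc 1) (\<lambda>ys. 1 - (triangle (Suc (ys ! 0)) - ys ! 1))"
    by (intro computable_diff computable_const computable_triangle computable_Suc computable_proj) simp_all
  have "\<exists>s. 1 - (triangle (Suc ((s # xs) ! 0)) - (s # xs) ! 1) = 0" for xs :: "nat list"
    by (rule exI[of _ "xs ! 0"]) simp
  then have "computable 1 (\<lambda>xs. LEAST s. 1 - (triangle (Suc ((s # xs) ! 0)) - (s # xs) ! 1) = 0)"
    using computable_Least[OF search] by simp
  moreover have "(1 - (t - c) = 0) \<longleftrightarrow> c < t" for t c :: nat
    by auto
  ultimately have "computable 1 (\<lambda>xs. fst (prod_decode (xs ! 0)) + snd (prod_decode (xs ! 0)))"
    by (simp add: prod_decode_diagonal)
  then show ?thesis using assms by (rule computable_comp1)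
qed

lemma computable_fst_prod_decode:
  assumes "computable n f" shows "computable n (\<lambda>xs. fst (prod_decode (f xs)))"
proof -
  have "computable n (\<lambda>xs. f xs - triangle (fst (prod_decode (f xs)) + snd (prod_decode (f xs))))"
    using assms by (intro computable_diff computable_triangle computable_prod_decode_diagonal)
  moreover have "c - triangle (fst (prod_decode c) + snd (prod_decode c)) = fst (prod_decode c)" for c
    using prod_decode_eq_triangle[of c] by (cases "prod_decode c") simp
  ultimately show ?thesis by simp
qed

lemma computable_snd_prod_decode:
  assumes "computable n f" shows "computable n (\<lambda>xs. snd (prod_decode (f xs)))"
  using computable_diff[OF computable_prod_decode_diagonal[OF assms] computable_fst_prod_decode[OF assms]]
  by simp

lemma decidable_reduction:
  assumes "decidable P" and r: "computable 1 (\<lambda>xs. r (xs ! 0))"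
    and "\<And>c. c \<in> fst Q \<Longrightarrow> r c \<in> fst P \<and> (r c \<in> snd P \<longleftrightarrow> c \<in> snd Q)"
  shows "decidable Q"
proof -
  obtain f where f: "recfn 1 f" "\<forall>c\<in>fst P. f [c] = 0 \<longleftrightarrow> c \<in> snd P"
    using assms(1) unfolding decidable_def by blast
  have "computable 1 (\<lambda>xs. f [xs ! 0])"
    using f(1) unfolding computable_def by (metis One_nat_def length_0_conv length_Suc_conv nth_Cons_0)
  from computable_comp1[OF this r] obtain g where g: "recfn 1 g" "\<forall>c. g [c] = f [r c]"
    unfolding computable_def by fastforce
  show ?thesis
    unfolding decidable_def using g f assms(3) by metis
qed

section \<open>Encoded decision problems\<close>

abbreviation instance_code :: "setclass \<Rightarrow> nat list \<Rightarrow> nat list list \<Rightarrow> nat list \<Rightarrow> nat" where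
  "instance_code cls y Ks x \<equiv> prod_encode (K_code cls y Ks, list_encode x)"

lemma word_ok_Suc: "word_ok n w \<Longrightarrow> word_ok (Suc n) w"
  by (auto simp: word_ok_def)

lemma K_ok_Suc: "K_ok cls n y Ks \<Longrightarrow> K_ok cls (Suc n) y Ks"
  by (auto simp: K_ok_def word_ok_Suc)

lemma word_ok_Cons_last: "word_ok n w \<Longrightarrow> word_ok (Suc n) (2 * n # w)"
  by (auto simp: word_ok_def)

lemma K_ok_Cons_last: "K_ok FGCoset n y Ks \<Longrightarrow> K_ok FGCoset (Suc n) (2 * n # y) Ks"
  by (auto simp: K_ok_def word_ok_Suc word_ok_Cons_last)

lemma enc_words_eq_iff: "enc_words Ks = enc_words Ks' \<longleftrightarrow> Ks = Ks'"
  unfolding enc_words_def list_encode_eq by (simp add: inj_list_encode)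

lemma K_code_inj:
  "K_code cls y Ks = K_code cls y' Ks' \<Longrightarrow> K_ok cls m y Ks \<Longrightarrow> K_ok cls m' y' Ks' \<Longrightarrow>
    y = y' \<and> Ks = Ks'"
  by (auto simp: K_ok_def K_code_def enc_words_eq_iff list_encode_eq split: if_splits)

lemma fixed_problem_instance:
  assumes "K_ok cls m y Ks" "word_ok m x"
  shows "instance_code cls y Ks x \<in> fst (fixed_problem cls m P)"
    and "instance_code cls y Ks x \<in> snd (fixed_problem cls m P) \<longleftrightarrow> P y Ks x"
  using assms by (auto simp: fixed_problem_def list_encode_eq dest: K_code_inj)

lemma uniform_problem_instance:
  assumes "\<forall>w\<in>set ps. word_ok (length gs) w" "\<exists>\<psi>. aut_given G gs ps \<psi>" "K_ok cls m y Ks" "word_ok m x"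
  shows "prod_encode (enc_words ps, instance_code cls y Ks x) \<in> fst (uniform_problem cls G gs m P)"
    and "prod_encode (enc_words ps, instance_code cls y Ks x) \<in> snd (uniform_problem cls G gs m P)
      \<longleftrightarrow> (\<exists>\<psi>. aut_given G gs ps \<psi> \<and> P \<psi> y Ks x)"
  using assms by (auto simp: uniform_problem_def list_encode_eq enc_words_eq_iff dest: K_code_inj)

lemma decidable_fixed_problem_reduction:
  assumes "decidable (fixed_problem cls m P)" and r: "computable 1 (\<lambda>xs. r (xs ! 0))"
    and "\<And>y Ks x. K_ok cls n y Ks \<Longrightarrow> word_ok n x \<Longrightarrow>
      r (instance_code cls y Ks x) = instance_code cls (f y) Ks (f x) \<and>
      K_ok cls m (f y) Ks \<and> word_ok m (f x)"
    and "\<And>y Ks x. K_ok cls n y Ks \<Longrightarrow> word_ok n x \<Longrightarrow> P (f y) Ks (f x) \<longleftrightarrow> Q y Ks x"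
  shows "decidable (fixed_problem cls n Q)"
proof (rule decidable_reduction[OF assms(1) r])
  fix c assume "c \<in> fst (fixed_problem cls n Q)"
  then obtain y Ks x where "c = instance_code cls y Ks x" "K_ok cls n y Ks" "word_ok n x"
    unfolding fixed_problem_def fst_conv mem_Collect_eq by blast
  then show "r c \<in> fst (fixed_problem cls m P) \<and>
      (r c \<in> snd (fixed_problem cls m P) \<longleftrightarrow> c \<in> snd (fixed_problem cls n Q))"
    using assms(3,4) fixed_problem_instance by metis
qed

lemma decidable_uniform_problem_reduction:
  assumes "decidable (uniform_problem cls G gs m P)" and r: "computable 1 (\<lambda>xs. r (xs ! 0))"
    and "\<And>ps y Ks x. K_ok cls n y Ks \<Longrightarrow> word_ok n x \<Longrightarrow>
      r (prod_encode (enc_words ps, instance_code cls y Ks x))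
        = prod_encode (enc_words ps, instance_code cls (f y) Ks (f x)) \<and>
      K_ok cls m (f y) Ks \<and> word_ok m (f x)"
    and "\<And>\<psi> y Ks x. \<psi> \<in> iso G G \<Longrightarrow> K_ok cls n y Ks \<Longrightarrow> word_ok n x \<Longrightarrow>
      P \<psi> (f y) Ks (f x) \<longleftrightarrow> Q \<psi> y Ks x"
  shows "decidable (uniform_problem cls G gs n Q)"
proof (rule decidable_reduction[OF assms(1) r])
  fix c assume "c \<in> fst (uniform_problem cls G gs n Q)"
  then obtain ps y Ks x where c: "c = prod_encode (enc_words ps, instance_code cls y Ks x)"
    "\<forall>w\<in>set ps. word_ok (length gs) w" "\<exists>\<psi>. aut_given G gs ps \<psi>" "K_ok cls n y Ks" "word_ok n x"
    unfolding uniform_problem_def fst_conv mem_Collect_eq by blast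
  have "(\<exists>\<psi>. aut_given G gs ps \<psi> \<and> P \<psi> (f y) Ks (f x)) \<longleftrightarrow> (\<exists>\<psi>. aut_given G gs ps \<psi> \<and> Q \<psi> y Ks x)"
    using assms(4) c(4,5) by (auto simp: aut_given_def)
  then show "r c \<in> fst (uniform_problem cls G gs m P) \<and>
      (r c \<in> snd (uniform_problem cls G gs m P) \<longleftrightarrow> c \<in> snd (uniform_problem cls G gs n Q))"
    using assms(3)[OF c(4,5)] uniform_problem_instance[OF c(2,3)] c(4,5) unfolding c(1) by simp
qed

definition cons_instance :: "nat \<Rightarrow> nat \<Rightarrow> nat" where
  "cons_instance a c = prod_encode
     (prod_encode (Suc (prod_encode (a, fst (prod_decode (fst (prod_decode c))))),
                   snd (prod_decode (fst (prod_decode c)))),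
      Suc (prod_encode (a, snd (prod_decode c))))"

text \<open>The formula comes from \<open>list_encode (a # w) = Suc (prod_encode (a, list_encode w))\<close>.\<close>

lemma cons_instance_code:
  "cons_instance a (instance_code FGCoset y Ks x) = instance_code FGCoset (a # y) Ks (a # x)"
  by (simp add: cons_instance_def K_code_def)

lemma computable_cons_instance: "computable n f \<Longrightarrow> computable n (\<lambda>xs. cons_instance a (f xs))"
  unfolding cons_instance_def
  by (intro computable_prod_encode computable_Suc computable_const computable_fst_prod_decode
      computable_snd_prod_decode)

section \<open>The semidirect product\<close>

lemma funpow_hom: "f \<in> hom G G \<Longrightarrow> f ^^ n \<in> hom G G"
  by (induction n) (auto simp: hom_def Pi_def)

lemma eval_word_Nil [simp]: "eval_word H hs [] = \<one>\<^bsub>H\<^esub>"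
  by (simp add: eval_word_def)

lemma eval_word_Cons [simp]:
  "eval_word H hs (l # w) =
    (if even l then hs ! (l div 2) else inv\<^bsub>H\<^esub> (hs ! (l div 2))) \<otimes>\<^bsub>H\<^esub> eval_word H hs w"
  by (simp add: eval_word_def)

lemma sdp_gens_nth: "i < length gs \<Longrightarrow> sdp_gens G gs ! i = (gs ! i, 0)"
  by (simp add: sdp_gens_def nth_append)

lemma sdp_gens_stable: "sdp_gens G gs ! length gs = (\<one>\<^bsub>G\<^esub>, 1)"
  by (simp add: sdp_gens_def nth_append)

lemma (in group) eval_word_closed:
  assumes "set hs \<subseteq> carrier G" "word_ok (length hs) w"
  shows "eval_word G hs w \<in> carrier G"
  using assms(2)
proof (induction w)
  case (Cons l w)
  then have "hs ! (l div 2) \<in> carrier G" "word_ok (length hs) w"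
    using assms(1) by (auto simp: word_ok_def)
  with Cons.IH show ?case by simp
qed simp

lemma (in group) K_set_closed:
  assumes "set hs \<subseteq> carrier G" "K_ok cls (length hs) y Ks"
  shows "K_set cls G hs y Ks \<subseteq> carrier G"
proof -
  have "eval_word G hs ` set Ks \<subseteq> carrier G" "eval_word G hs y \<in> carrier G"
    using assms eval_word_closed by (auto simp: K_ok_def)
  then show ?thesis
    using generate_incl l_coset_subset_G[OF generate_incl] by (simp add: K_set_def)
qed

locale group_automorphism = group G for G (structure) +
  fixes \<psi>
  assumes iso: "\<psi> \<in> iso G G"
begin

definition \<sigma> where "\<sigma> = inv_into (carrier G) \<psi>"

abbreviation \<alpha> where "\<alpha> \<equiv> autpow G \<psi>"

lemma map_hom: "\<psi> \<in> hom G G"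
  using iso by (simp add: iso_def)

lemma inv_map_hom: "\<sigma> \<in> hom G G"
  using iso_set_sym[OF iso] unfolding \<sigma>_def by (simp add: iso_def)

lemma map_closed [simp]: "x \<in> carrier G \<Longrightarrow> \<psi> x \<in> carrier G"
  by (rule hom_in_carrier[OF map_hom])

lemma inv_map_closed [simp]: "x \<in> carrier G \<Longrightarrow> \<sigma> x \<in> carrier G"
  by (rule hom_in_carrier[OF inv_map_hom])

lemma map_bij: "bij_betw \<psi> (carrier G) (carrier G)"
  using iso by (simp add: iso_def)

lemma map_inv_map [simp]: "x \<in> carrier G \<Longrightarrow> \<psi> (\<sigma> x) = x"
  unfolding \<sigma>_def by (rule bij_betw_inv_into_right[OF map_bij])

lemma inv_map_map [simp]: "x \<in> carrier G \<Longrightarrow> \<sigma> (\<psi> x) = x"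
  unfolding \<sigma>_def by (rule bij_betw_inv_into_left[OF map_bij])

lemma autpow_hom: "\<alpha> k \<in> hom G G"
  unfolding autpow_def using funpow_hom[OF map_hom] funpow_hom[OF inv_map_hom] by (simp add: \<sigma>_def)

lemma autpow_group_hom: "group_hom G G (\<alpha> k)"
  by (simp add: group_hom_def group_hom_axioms_def autpow_hom is_group)

lemma autpow_closed [simp]: "x \<in> carrier G \<Longrightarrow> \<alpha> k x \<in> carrier G"
  by (rule hom_in_carrier[OF autpow_hom])

lemma autpow_mult [simp]:
  "x \<in> carrier G \<Longrightarrow> y \<in> carrier G \<Longrightarrow> \<alpha> k (x \<otimes> y) = \<alpha> k x \<otimes> \<alpha> k y"
  by (rule hom_mult[OF autpow_hom])

lemma autpow_inv [simp]: "x \<in> carrier G \<Longrightarrow> \<alpha> k (inv x) = inv (\<alpha> k x)"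
  by (rule group_hom.hom_inv[OF autpow_group_hom])

lemma autpow_zero [simp]: "\<alpha> 0 x = x"
  by (simp add: autpow_def)

lemma autpow_one: "\<alpha> 1 x = \<psi> x"
  by (simp add: autpow_def)

lemma autpow_minus_one: "\<alpha> (- 1) x = \<sigma> x"
  by (simp add: autpow_def \<sigma>_def)

lemma map_inv: "x \<in> carrier G \<Longrightarrow> \<psi> (inv x) = inv (\<psi> x)"
  using autpow_inv[of x 1] by (simp add: autpow_one)

lemma inv_map_inv: "x \<in> carrier G \<Longrightarrow> \<sigma> (inv x) = inv (\<sigma> x)"
  using autpow_inv[of x "- 1"] by (simp add: autpow_minus_one)

lemma autpow_succ: "x \<in> carrier G \<Longrightarrow> \<alpha> (k + 1) x = \<psi> (\<alpha> k x)"
proof (cases "0 \<le> k")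
  case True
  then have "nat (k + 1) = Suc (nat k)" by simp
  with True show ?thesis by (simp add: autpow_def)
next
  case False
  assume x: "x \<in> carrier G"
  have "nat (- k) = Suc (nat (- (k + 1)))" using False by simp
  then have "\<alpha> k x = \<sigma> ((\<sigma> ^^ nat (- (k + 1))) x)"
    using False by (simp add: autpow_def \<sigma>_def)
  moreover have "\<alpha> (k + 1) x = (\<sigma> ^^ nat (- (k + 1))) x"
    using False by (cases "k + 1 = 0") (auto simp: autpow_def \<sigma>_def)
  moreover have "(\<sigma> ^^ nat (- (k + 1))) x \<in> carrier G"
    using hom_in_carrier[OF funpow_hom[OF inv_map_hom] x] .
  ultimately show ?thesis by simp
qed

lemma autpow_pred: "x \<in> carrier G \<Longrightarrow> \<alpha> (k - 1) x = \<sigma> (\<alpha> k x)"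
  using autpow_succ[of x "k - 1"] by simp

lemma autpow_add: "x \<in> carrier G \<Longrightarrow> \<alpha> (k + l) x = \<alpha> k (\<alpha> l x)"
proof (induction k rule: int_induct[where k = 0])
  case (step1 i)
  then show ?case using autpow_succ[of "\<alpha> l x" i] autpow_succ[of x "i + l"]
    by (simp add: algebra_simps)
next
  case (step2 i)
  then show ?case using autpow_pred[of "\<alpha> l x" i] autpow_pred[of x "i + l"]
    by (simp add: algebra_simps)
qed simp

lemma autpow_autpow_neg: "z \<in> carrier G \<Longrightarrow> \<alpha> k (\<alpha> (- k) z) = z"
  using autpow_add[of z k "- k"] by simp

abbreviation GZ where "GZ \<equiv> sdp G \<psi>"

lemma sdp_carrier [simp]: "carrier GZ = carrier G \<times> UNIV"
  by (simp add: sdp_def)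

lemma sdp_mult [simp]: "(a, k) \<otimes>\<^bsub>GZ\<^esub> (b, l) = (a \<otimes> \<alpha> (- k) b, k + l)"
  by (simp add: sdp_def)

lemma sdp_one [simp]: "\<one>\<^bsub>GZ\<^esub> = (\<one>, 0)"
  by (simp add: sdp_def)

lemma sdp_group: "group GZ"
proof (rule groupI)
  fix x y assume "x \<in> carrier GZ" "y \<in> carrier GZ"
  then show "x \<otimes>\<^bsub>GZ\<^esub> y \<in> carrier GZ" by (cases x, cases y) simp
next
  fix x y z assume "x \<in> carrier GZ" "y \<in> carrier GZ" "z \<in> carrier GZ"
  then show "x \<otimes>\<^bsub>GZ\<^esub> y \<otimes>\<^bsub>GZ\<^esub> z = x \<otimes>\<^bsub>GZ\<^esub> (y \<otimes>\<^bsub>GZ\<^esub> z)"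
    by (cases x, cases y, cases z) (simp add: m_assoc autpow_add[symmetric] add.assoc)
next
  fix x assume "x \<in> carrier GZ"
  then show "\<one>\<^bsub>GZ\<^esub> \<otimes>\<^bsub>GZ\<^esub> x = x" by (cases x) simp
next
  fix x assume "x \<in> carrier GZ"
  then obtain w k where x: "x = (w, k)" "w \<in> carrier G" by (cases x) auto
  then have "(\<alpha> k (inv w), - k) \<otimes>\<^bsub>GZ\<^esub> x = \<one>\<^bsub>GZ\<^esub>"
    by (simp flip: autpow_mult)
  moreover have "(\<alpha> k (inv w), - k) \<in> carrier GZ" using x(2) by simp
  ultimately show "\<exists>y\<in>carrier GZ. y \<otimes>\<^bsub>GZ\<^esub> x = \<one>\<^bsub>GZ\<^esub>" by blast
qed simp

lemma sdp_inv [simp]: "w \<in> carrier G \<Longrightarrow> inv\<^bsub>GZ\<^esub> (w, k) = (\<alpha> k (inv w), - k)"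
  by (rule group.inv_equality[OF sdp_group]) (simp_all flip: autpow_mult)

lemma sdp_embedding: "group_hom G GZ (\<lambda>g. (g, 0))"
  unfolding group_hom_def group_hom_axioms_def by (auto simp: is_group sdp_group intro!: homI)

lemma eval_word_sdp:
  assumes "set gs \<subseteq> carrier G" "word_ok (length gs) w"
  shows "eval_word GZ (sdp_gens G gs) w = (eval_word G gs w, 0)"
  using assms(2)
proof (induction w)
  case (Cons l w)
  then have l: "l div 2 < length gs" and w: "word_ok (length gs) w"
    by (auto simp: word_ok_def)
  then have "gs ! (l div 2) \<in> carrier G" "eval_word G gs w \<in> carrier G"
    using assms(1) eval_word_closed[OF assms(1) w] by auto
  then show ?case
    using Cons.IH[OF w] l by (simp add: sdp_gens_nth)
qed simp

text \<open>The letter \<open>2 * length gs\<close> stands for the stable letter t = (\<one>, 1), and t g = \<sigma>(g) t.\<close>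

lemma eval_word_sdp_stable:
  assumes "set gs \<subseteq> carrier G" "word_ok (length gs) w"
  shows "eval_word GZ (sdp_gens G gs) (2 * length gs # w) = (\<sigma> (eval_word G gs w), 1)"
  using eval_word_sdp[OF assms] eval_word_closed[OF assms]
  by (simp add: sdp_gens_stable autpow_minus_one)

lemma generate_sdp:
  assumes "set gs \<subseteq> carrier G" "\<forall>w\<in>set Ks. word_ok (length gs) w"
  shows "generate GZ (eval_word GZ (sdp_gens G gs) ` set Ks)
    = (\<lambda>g. (g, 0)) ` generate G (eval_word G gs ` set Ks)"
proof -
  have "eval_word GZ (sdp_gens G gs) ` set Ks = (\<lambda>g. (g, 0)) ` eval_word G gs ` set Ks"
    using eval_word_sdp[OF assms(1)] assms(2) by force
  moreover have "eval_word G gs ` set Ks \<subseteq> carrier G"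
    using eval_word_closed[OF assms(1)] assms(2) by blast
  ultimately show ?thesis
    using group_hom.generate_img[OF sdp_embedding] by simp
qed

lemma K_set_sdp:
  assumes "set gs \<subseteq> carrier G" "K_ok cls (length gs) y Ks"
  shows "K_set cls GZ (sdp_gens G gs) y Ks = (\<lambda>g. (g, 0)) ` K_set cls G gs y Ks"
proof -
  have "(a, 0) <#\<^bsub>GZ\<^esub> (\<lambda>g. (g, 0)) ` H = (\<lambda>g. (g, 0)) ` (a <# H)" if "H \<subseteq> carrier G" for a H
    using that by (auto simp: l_coset_def)
  moreover have "generate G (eval_word G gs ` set Ks) \<subseteq> carrier G"
    using assms eval_word_closed by (intro generate_incl) (auto simp: K_ok_def)
  ultimately show ?thesis
    using generate_sdp[OF assms(1)] eval_word_sdp[OF assms(1)] assms(2)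
    by (simp add: K_set_def K_ok_def)
qed

lemma K_set_sdp_stable:
  assumes "set gs \<subseteq> carrier G" "K_ok FGCoset (length gs) y Ks"
  shows "K_set FGCoset GZ (sdp_gens G gs) (2 * length gs # y) Ks
    = (\<lambda>q. (\<sigma> q, 1)) ` K_set FGCoset G gs y Ks"
proof -
  have "(\<sigma> a, 1) <#\<^bsub>GZ\<^esub> (\<lambda>g. (g, 0)) ` H = (\<lambda>q. (\<sigma> q, 1)) ` (a <# H)"
    if "H \<subseteq> carrier G" "a \<in> carrier G" for a H
  proof -
    have "\<sigma> a \<otimes> \<alpha> (- 1) h = \<sigma> (a \<otimes> h)" if "h \<in> H" for h
      using that \<open>H \<subseteq> carrier G\<close> \<open>a \<in> carrier G\<close> hom_mult[OF inv_map_hom, of a h]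
      by (auto simp: autpow_minus_one)
    then show ?thesis by (force simp: l_coset_def)
  qed
  moreover have "generate G (eval_word G gs ` set Ks) \<subseteq> carrier G" "eval_word G gs y \<in> carrier G"
    using assms eval_word_closed by (auto intro!: generate_incl simp: K_ok_def)
  ultimately show ?thesis
    using generate_sdp[OF assms(1)] eval_word_sdp_stable[OF assms(1)] assms(2)
    by (simp add: K_set_def K_ok_def)
qed

lemma sdp_conj_embedding:
  assumes "w \<in> carrier G" "g \<in> carrier G"
  shows "inv\<^bsub>GZ\<^esub> (w, k) \<otimes>\<^bsub>GZ\<^esub> (g, 0) \<otimes>\<^bsub>GZ\<^esub> (w, k) = (inv (\<alpha> k w) \<otimes> \<alpha> k g \<otimes> \<alpha> k w, 0)"
  using assms by simp

lemma gcp_pred_sdp_iff_brcp_pred: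
  assumes gs: "set gs \<subseteq> carrier G" and K: "K_ok cls (length gs) y Ks" and x: "word_ok (length gs) x"
  shows "gcp_pred cls GZ (sdp_gens G gs) y Ks x \<longleftrightarrow> brcp_pred cls G gs \<psi> y Ks x"
proof -
  define g where "g = eval_word G gs x"
  define K where "K = K_set cls G gs y Ks"
  have g: "g \<in> carrier G" unfolding g_def by (rule eval_word_closed[OF gs x])
  have "gcp_pred cls GZ (sdp_gens G gs) y Ks x \<longleftrightarrow>
      (\<exists>k. \<exists>w\<in>carrier G. inv (\<alpha> k w) \<otimes> \<alpha> k g \<otimes> \<alpha> k w \<in> K)"
    unfolding gcp_pred_def eval_word_sdp[OF gs x] K_set_sdp[OF gs K] g_def[symmetric] K_def[symmetric]
    using g by (auto simp: sdp_conj_embedding image_iff simp del: sdp_inv sdp_mult)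
  also have "\<dots> \<longleftrightarrow> (\<exists>k. \<exists>z\<in>carrier G. inv z \<otimes> \<alpha> k g \<otimes> z \<in> K)"
    by (metis autpow_closed autpow_autpow_neg)
  finally show ?thesis
    unfolding brcp_pred_def g_def K_def .
qed

definition twisted_conj :: "'a \<Rightarrow> 'a \<Rightarrow> bool" where
  "twisted_conj a b \<longleftrightarrow> (\<exists>v\<in>carrier G. b = inv (\<psi> v) \<otimes> a \<otimes> v)"

lemma twisted_conj_refl: "a \<in> carrier G \<Longrightarrow> twisted_conj a a"
  unfolding twisted_conj_def using hom_one[OF map_hom] by (intro bexI[of _ \<one>]) auto

lemma twisted_conj_trans:
  assumes "a \<in> carrier G" "twisted_conj a b" "twisted_conj b c"
  shows "twisted_conj a c"
proof -
  obtain v v' where v: "v \<in> carrier G" "b = inv (\<psi> v) \<otimes> a \<otimes> v"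
    and v': "v' \<in> carrier G" "c = inv (\<psi> v') \<otimes> b \<otimes> v'"
    using assms(2,3) unfolding twisted_conj_def by blast
  have "c = inv (\<psi> (v \<otimes> v')) \<otimes> a \<otimes> (v \<otimes> v')"
    using assms(1) v v' by (simp add: hom_mult[OF map_hom] inv_mult_group m_assoc)
  with v v' show ?thesis unfolding twisted_conj_def by blast
qed

lemma twisted_conj_apply: "b \<in> carrier G \<Longrightarrow> twisted_conj b (\<psi> b)"
  unfolding twisted_conj_def
  by (intro bexI[of _ "inv b"]) (simp_all add: map_inv m_assoc)

lemma twisted_conj_inv_apply: "b \<in> carrier G \<Longrightarrow> twisted_conj b (\<sigma> b)"
  unfolding twisted_conj_def by (intro bexI[of _ "\<sigma> b"]) simp_all

lemma twisted_conj_autpow: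
  assumes a: "a \<in> carrier G" shows "twisted_conj a (\<alpha> k a)"
proof (induction k rule: int_induct[where k = 0])
  case base
  show ?case using twisted_conj_refl[OF a] by simp
next
  case (step1 i)
  then show ?case
    using twisted_conj_trans[OF a step1(2) twisted_conj_apply] autpow_succ[OF a] a by simp
next
  case (step2 i)
  then show ?case
    using twisted_conj_trans[OF a step2(2) twisted_conj_inv_apply] autpow_pred[OF a] a by simp
qed

lemma sdp_conj_stable:
  assumes w: "w \<in> carrier G" and e: "e \<in> carrier G"
  shows "inv\<^bsub>GZ\<^esub> (w, k) \<otimes>\<^bsub>GZ\<^esub> (\<sigma> e, 1) \<otimes>\<^bsub>GZ\<^esub> (w, k)
    = (\<sigma> (inv (\<psi> (\<alpha> k w)) \<otimes> \<alpha> k e \<otimes> \<alpha> k w), 1)"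
proof -
  have "\<alpha> k (\<sigma> e) = \<sigma> (\<alpha> k e)"
    using autpow_add[OF e, of k "- 1"] autpow_add[OF e, of "- 1" k] by (simp add: autpow_minus_one add.commute)
  moreover have "\<alpha> (k - 1) w = \<sigma> (\<alpha> k w)" by (rule autpow_pred[OF w])
  moreover have "\<sigma> (inv (\<psi> (\<alpha> k w))) = inv (\<alpha> k w)"
    using w by (simp add: inv_map_inv)
  ultimately show ?thesis
    using w e by (simp add: hom_mult[OF inv_map_hom])
qed

lemma gcp_pred_sdp_stable_iff_tcp_pred:
  assumes gs: "set gs \<subseteq> carrier G" and K: "K_ok FGCoset (length gs) y Ks" and x: "word_ok (length gs) x"
  shows "gcp_pred FGCoset GZ (sdp_gens G gs) (2 * length gs # y) Ks (2 * length gs # x)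
    \<longleftrightarrow> tcp_pred FGCoset G gs \<psi> y Ks x"
proof -
  define e where "e = eval_word G gs x"
  define K where "K = K_set FGCoset G gs y Ks"
  have e: "e \<in> carrier G" unfolding e_def by (rule eval_word_closed[OF gs x])
  have "K \<subseteq> carrier G" unfolding K_def by (rule K_set_closed[OF gs K])
  then have mem: "(\<sigma> a, 1) \<in> (\<lambda>q. (\<sigma> q, 1)) ` K \<longleftrightarrow> a \<in> K" if "a \<in> carrier G" for a
    using that inj_onD[OF bij_betw_imp_inj_on[OF bij_betw_inv_into[OF map_bij]]] by (auto simp: \<sigma>_def)
  have "gcp_pred FGCoset GZ (sdp_gens G gs) (2 * length gs # y) Ks (2 * length gs # x) \<longleftrightarrow>
      (\<exists>k. \<exists>w\<in>carrier G. inv (\<psi> (\<alpha> k w)) \<otimes> \<alpha> k e \<otimes> \<alpha> k w \<in> K)"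
    unfolding gcp_pred_def eval_word_sdp_stable[OF gs x] K_set_sdp_stable[OF gs K]
      e_def[symmetric] K_def[symmetric]
    using e by (auto simp: sdp_conj_stable mem simp del: sdp_inv sdp_mult)
  also have "\<dots> \<longleftrightarrow> (\<exists>k. \<exists>b\<in>K. twisted_conj (\<alpha> k e) b)"
    unfolding twisted_conj_def by (metis autpow_closed autpow_autpow_neg)
  also have "\<dots> \<longleftrightarrow> (\<exists>b\<in>K. twisted_conj e b)"
    using twisted_conj_trans[OF e twisted_conj_autpow[OF e]] by (metis autpow_zero)
  finally show ?thesis
    unfolding tcp_pred_def twisted_conj_def e_def K_def by blast
qed

end

lemma group_automorphismI: "group G \<Longrightarrow> \<psi> \<in> iso G G \<Longrightarrow> group_automorphism G \<psi>"
  by (simp add: group_automorphism_def group_automorphism_axioms_def)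

lemma decidable_GBrCP_fixed:
  assumes "group G" "set gs \<subseteq> carrier G" "\<phi> \<in> iso G G" "decidable (GCP_fixed cls G gs \<phi>)"
  shows "decidable (GBrCP_fixed cls G gs \<phi>)"
  using assms(4) unfolding GCP_fixed_def GBrCP_fixed_def
  by (rule decidable_fixed_problem_reduction[where f = id, OF _ computable_proj])
    (auto simp: group_automorphism.gcp_pred_sdp_iff_brcp_pred[OF group_automorphismI[OF assms(1,3)] assms(2)]
      word_ok_Suc K_ok_Suc)

lemma decidable_GTCP_fixed:
  assumes "group G" "set gs \<subseteq> carrier G" "\<phi> \<in> iso G G" "decidable (GCP_fixed FGCoset G gs \<phi>)"
  shows "decidable (GTCP_fixed FGCoset G gs \<phi>)"
  using assms(4) unfolding GCP_fixed_def GTCP_fixed_def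
  by (rule decidable_fixed_problem_reduction[where f = "Cons (2 * length gs)",
        OF _ computable_cons_instance[OF computable_proj]])
    (auto simp: cons_instance_code word_ok_Cons_last K_ok_Cons_last
      group_automorphism.gcp_pred_sdp_stable_iff_tcp_pred[OF group_automorphismI[OF assms(1,3)] assms(2)])

lemma decidable_GBrCP_unif:
  assumes "group G" "set gs \<subseteq> carrier G" "decidable (GCP_unif cls G gs)"
  shows "decidable (GBrCP_unif cls G gs)"
  using assms(3) unfolding GCP_unif_def GBrCP_unif_def
  by (rule decidable_uniform_problem_reduction[where f = id, OF _ computable_proj])
    (auto simp: group_automorphism.gcp_pred_sdp_iff_brcp_pred[OF group_automorphismI[OF assms(1)] assms(2)]
      word_ok_Suc K_ok_Suc)

lemma decidable_GTCP_unif: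
  assumes "group G" "set gs \<subseteq> carrier G" "decidable (GCP_unif FGCoset G gs)"
  shows "decidable (GTCP_unif FGCoset G gs)"
proof -
  let ?t = "2 * length gs"
  have "computable 1 (\<lambda>xs. prod_encode (fst (prod_decode (xs ! 0)), cons_instance ?t (snd (prod_decode (xs ! 0)))))"
    by (intro computable_prod_encode computable_fst_prod_decode computable_cons_instance
        computable_snd_prod_decode computable_proj) simp_all
  with assms(3) show ?thesis
    unfolding GCP_unif_def GTCP_unif_def
    by (rule decidable_uniform_problem_reduction[where f = "Cons ?t"])
      (auto simp: cons_instance_code word_ok_Cons_last K_ok_Cons_last
        group_automorphism.gcp_pred_sdp_stable_iff_tcp_pred[OF group_automorphismI[OF assms(1)] assms(2)])
qed

theorem corollary3p4:
  fixes G :: "('a, 'b) monoid_scheme" and gs :: "'a list" and \<phi> :: "'a \<Rightarrow> 'a"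
  assumes "group G"
    and "set gs \<subseteq> carrier G"
    and "generate G (set gs) = carrier G"
    and "\<phi> \<in> iso G G"
  shows "(decidable (GCP_fixed FG G gs \<phi>) \<longrightarrow> decidable (GBrCP_fixed FG G gs \<phi>))
       \<and> (decidable (GCP_unif FG G gs) \<longrightarrow> decidable (GBrCP_unif FG G gs))
       \<and> (decidable (GCP_fixed FGCoset G gs \<phi>) \<longrightarrow>
            decidable (GBrCP_fixed FGCoset G gs \<phi>) \<and> decidable (GTCP_fixed FGCoset G gs \<phi>))
       \<and> (decidable (GCP_unif FGCoset G gs) \<longrightarrow>
            decidable (GBrCP_unif FGCoset G gs) \<and> decidable (GTCP_unif FGCoset G gs))"
  using decidable_GBrCP_fixed[OF assms(1,2,4)] decidable_GTCP_fixed[OF assms(1,2,4)]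
    decidable_GBrCP_unif[OF assms(1,2)] decidable_GTCP_unif[OF assms(1,2)]
  by blast

end
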